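(* $T^2\Lambda=\Xi_2\oplus(l-\psi)T\Lambda$ (internal direct sum).
   Context: Let $l$ be an odd prime, $\Lambda=\mathbb{Z}_l[[T]]$, and let $\psi$ be the continuous $\mathbb{Z}_l$-algebra endomorphism of $\Lambda$ with $\psi(T)=(1+T)^l-1$; $(l-\psi)x=lx-\psi(x)$. Let $\Lambda_\wedge=\{\sum_{k\in\mathbb{Z}}x_kT^k: x_k\in\mathbb{Z}_l,\ x_k\to0 \text{ as } k\to-\infty\}$, $\Xi=\{\sum_k x_kT^k\in\Lambda_\wedge: x_k=0 \text{ whenever } l\mid k\}$, and for $s\in\mathbb{Z}$, $\Xi_s=\{\sum_{k\ge s}x_kT^k\in\Xi\}$. Thus $\Xi_2$ consists of power series $\sum_{k\ge2,\,l\nmid k}x_kT^k\in\Lambda$. *)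

theory Defs
  imports "HOL-Computational_Algebra.Formal_Power_Series"
begin

text \<open>l-adic integers Z_l, realised as the inverse limit of Z/l^n Z:
  an element is a compatible sequence a with a n in [0, l^n) and
  a (n+1) mod l^n = a n (a n is the residue mod l^n).\<close>

type_synonym zl = "nat \<Rightarrow> int"

definition zl_set :: "nat \<Rightarrow> zl set" where
  "zl_set l = {a. \<forall>n. 0 \<le> a n \<and> a n < int l ^ n \<and> a (Suc n) mod int l ^ n = a n}"

text \<open>Lambda = Z_l[[T]]: an element x is its coefficient sequence, x k in Z_l being
  the coefficient of T^k.\<close>

type_synonym lam = "nat \<Rightarrow> zl"

definition lam_set :: "nat \<Rightarrow> lam set" where
  "lam_set l = {x. \<forall>k. x k \<in> zl_set l}"

definition level :: "lam \<Rightarrow> nat \<Rightarrow> int fps" where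
  "level x n = Abs_fps (\<lambda>k. x k n)"

definition of_levels :: "nat \<Rightarrow> (nat \<Rightarrow> int fps) \<Rightarrow> lam" where
  "of_levels l F = (\<lambda>k n. fps_nth (F n) k mod int l ^ n)"

definition lam_zero :: lam where
  "lam_zero = (\<lambda>k n. 0)"

definition lam_add :: "nat \<Rightarrow> lam \<Rightarrow> lam \<Rightarrow> lam" where
  "lam_add l x y = of_levels l (\<lambda>n. level x n + level y n)"

definition lam_mul :: "nat \<Rightarrow> lam \<Rightarrow> lam \<Rightarrow> lam" where
  "lam_mul l x y = of_levels l (\<lambda>n. level x n * level y n)"

definition lam_T :: "nat \<Rightarrow> lam" where
  "lam_T l = of_levels l (\<lambda>n. fps_X)"

text \<open>psi: the continuous Z_l-algebra endomorphism with psi(T) = (1+T)^l - 1,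
  i.e. psi x = x((1+T)^l - 1) (formal composition, well defined since
  (1+T)^l - 1 has zero constant term).\<close>
definition lam_psi :: "nat \<Rightarrow> lam \<Rightarrow> lam" where
  "lam_psi l x = of_levels l (\<lambda>n. fps_compose (level x n) ((1 + fps_X) ^ l - 1))"

definition lam_l_minus_psi :: "nat \<Rightarrow> lam \<Rightarrow> lam" where
  "lam_l_minus_psi l x =
     of_levels l (\<lambda>n. fps_const (int l) * level x n - fps_compose (level x n) ((1 + fps_X) ^ l - 1))"

text \<open>Xi_s intersected with Lambda for s \<ge> 0: power series sum_{k \<ge> s, l not dividing k} x_k T^k.\<close>
definition Xi :: "nat \<Rightarrow> nat \<Rightarrow> lam set" where
  "Xi l s = {x \<in> lam_set l. \<forall>k. (k < s \<or> l dvd k) \<longrightarrow> x k = (\<lambda>n. 0)}"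

definition T2Lam :: "nat \<Rightarrow> lam set" where
  "T2Lam l = {lam_mul l (lam_mul l (lam_T l) (lam_T l)) y | y. y \<in> lam_set l}"

definition LpsiTLam :: "nat \<Rightarrow> lam set" where
  "LpsiTLam l = {lam_l_minus_psi l (lam_mul l (lam_T l) y) | y. y \<in> lam_set l}"

end

theory Submission
  imports Defs "HOL-Computational_Algebra.Primes"
begin

(* An element of Lambda = Z_l[[T]] is represented by its reductions modulo l^n,
   which are integer power series; the theorem is reduced to integer power series modulo
   l^n, uniformly in n.  There l - psi becomes lmpsi g = l*g - g((1+X)^l - 1), and since
   (1+X)^l - 1 == X^l (mod l) we get lmpsi(X*y) == -(X*y)(X^l) (mod l): modulo l,
   lmpsi(X*y) only meets the exponents divisible by l, which are exactly those that Xi_2 avoids. *)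

unbundle fps_syntax


section \<open>Congruence of power series modulo a constant\<close>

definition fps_cong :: "'a::comm_ring_1 \<Rightarrow> 'a fps \<Rightarrow> 'a fps \<Rightarrow> bool" where
  "fps_cong c f g \<longleftrightarrow> (\<forall>k. c dvd f $ k - g $ k)"

lemma fps_cong_refl [simp]: "fps_cong c f f"
  by (simp add: fps_cong_def)

lemma fps_cong_sym: "fps_cong c f g \<Longrightarrow> fps_cong c g f"
  unfolding fps_cong_def by (metis dvd_minus_iff minus_diff_eq)

lemma fps_cong_trans [trans]: "fps_cong c f g \<Longrightarrow> fps_cong c g h \<Longrightarrow> fps_cong c f h"
  unfolding fps_cong_def by (metis diff_add_cancel dvd_add add_diff_eq diff_diff_eq2)

lemma fps_cong_sub_zero_iff: "fps_cong c (f - g) 0 \<longleftrightarrow> fps_cong c f g"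
  by (simp add: fps_cong_def)

text \<open>The congruence is divisibility of the difference by the constant series c;
  this is what lets us factor out l in the inductive arguments below.\<close>

lemma fps_cong_iff_dvd: "fps_cong c f g \<longleftrightarrow> fps_const c dvd (f - g)"
proof
  assume "fps_cong c f g"
  then have "\<forall>k. \<exists>q. f $ k - g $ k = c * q" unfolding fps_cong_def dvd_def by blast
  then obtain q where q: "\<And>k. f $ k - g $ k = c * q k" by metis
  have "f - g = fps_const c * Abs_fps q" by (intro fps_ext) (simp add: q)
  then show "fps_const c dvd (f - g)" by (rule dvdI)
next
  assume "fps_const c dvd (f - g)"
  then obtain h where "f - g = fps_const c * h" by (auto elim: dvdE)
  then have "(f - g) $ k = c * h $ k" for k by simp
  then show "fps_cong c f g" unfolding fps_cong_def by simp
qed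

lemma fps_cong_add: "fps_cong c f g \<Longrightarrow> fps_cong c f' g' \<Longrightarrow> fps_cong c (f + f') (g + g')"
  unfolding fps_cong_def by (simp add: dvd_add add_diff_add)

lemma fps_cong_diff:
  assumes "fps_cong c f g" "fps_cong c f' g'"
  shows "fps_cong c (f - f') (g - g')"
proof -
  have "(f - f') - (g - g') = (f - g) - (f' - g')" by (simp add: algebra_simps)
  then show ?thesis using assms unfolding fps_cong_iff_dvd by (metis dvd_diff)
qed

lemma fps_cong_mult:
  assumes "fps_cong c f g" "fps_cong c f' g'"
  shows "fps_cong c (f * f') (g * g')"
proof -
  have "f * f' - g * g' = f * (f' - g') + (f - g) * g'" by (simp add: algebra_simps)
  then show ?thesis using assms unfolding fps_cong_iff_dvd by (simp add: dvd_add)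
qed

lemma fps_cong_power: "fps_cong c f g \<Longrightarrow> fps_cong c (f ^ i) (g ^ i)"
  by (induction i) (auto intro: fps_cong_mult)

lemma fps_cong_const_mult_zero: "fps_cong c (fps_const c * f) 0"
  by (simp add: fps_cong_def)

lemma fps_cong_dvd_modulus: "fps_cong c f g \<Longrightarrow> d dvd c \<Longrightarrow> fps_cong d f g"
  unfolding fps_cong_def using dvd_trans by blast

lemma fps_cong_shift: "fps_cong c f g \<Longrightarrow> fps_cong c (fps_shift n f) (fps_shift n g)"
  by (simp add: fps_cong_def)

text \<open>Substituting congruent series into a fixed series gives congruent results
  (the coefficients of a composition are polynomial in those of the inner series).\<close>

lemma fps_cong_compose_right:
  assumes "fps_cong c f g"
  shows "fps_cong c (h oo f) (h oo g)"
proof -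
  have "fps_cong c (f ^ i) (g ^ i)" for i using assms by (rule fps_cong_power)
  then show ?thesis
    unfolding fps_cong_def fps_compose_nth
    by (simp add: sum_subtractf[symmetric] right_diff_distrib[symmetric] dvd_sum)
qed

lemma fps_cong_cancel_const:
  fixes c :: "'a::idom"
  assumes "c \<noteq> 0"
  shows "fps_cong (c * d) (fps_const c * f) (fps_const c * g) \<longleftrightarrow> fps_cong d f g"
  using assms by (simp add: fps_cong_def right_diff_distrib[symmetric])

section \<open>The operator l - psi on power series\<close>

lemma one_plus_X_power_nth: "((1 + fps_X :: 'a::comm_semiring_1 fps) ^ n) $ k = of_nat (n choose k)"
proof (induction n arbitrary: k)
  case 0
  then show ?case by (cases k) simp_all
next
  case (Suc n)
  have "(1 + fps_X :: 'a fps) ^ Suc n = (1 + fps_X) ^ n + fps_X * (1 + fps_X) ^ n"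
    by (simp add: algebra_simps)
  then show ?case using Suc by (cases k) (auto simp: add.commute)
qed

definition psi_T :: "nat \<Rightarrow> 'a::comm_ring_1 fps" where
  "psi_T l = (1 + fps_X) ^ l - 1"

lemma psi_T_cong_X_power:
  assumes "prime l"
  shows "fps_cong (of_nat l :: 'a::comm_ring_1) (psi_T l) (fps_X ^ l)"
  unfolding fps_cong_def
proof
  fix k
  have l0: "l \<noteq> 0" using assms by auto
  have nth: "psi_T l $ k = (of_nat (l choose k) - (if k = 0 then 1 else 0) :: 'a)"
    by (simp add: psi_T_def one_plus_X_power_nth)
  show "of_nat l dvd psi_T l $ k - (fps_X ^ l :: 'a fps) $ k"
  proof (cases "k = 0 \<or> k \<ge> l")
    case True
    then show ?thesis using l0 by (auto simp: nth binomial_eq_0)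
  next
    case False
    then have "l dvd (l choose k)" using dvd_choose_prime[of k l] assms l0 by auto
    then show ?thesis using False by (auto simp: nth elim!: dvdE)
  qed
qed

lemma compose_X_power_nth:
  assumes "l > 0"
  shows "(g oo fps_X ^ l) $ k = (if l dvd k then g $ (k div l) else (0::'a::comm_ring_1))"
proof -
  have "(g oo fps_X ^ l) $ k = (\<Sum>i\<in>{0..k}. if i = k div l \<and> l dvd k then g $ i else 0)"
    unfolding fps_compose_nth power_mult[symmetric]
    by (intro sum.cong refl) (use assms in \<open>auto simp: mult.commute\<close>)
  also have "\<dots> = (if l dvd k then g $ (k div l) else 0)"
    by (cases "l dvd k") (auto simp: div_le_dividend)
  finally show ?thesis .
qed

lemma compose_X_mult_X_power_nth:
  assumes "l > 0"
  shows "((fps_X * y) oo fps_X ^ l) $ k =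
           (if l dvd k \<and> k \<noteq> 0 then y $ (k div l - 1) else (0::'a::comm_ring_1))"
  using assms by (auto simp: compose_X_power_nth elim!: dvdE)

definition lmpsi :: "nat \<Rightarrow> int fps \<Rightarrow> int fps" where
  "lmpsi l g = fps_const (int l) * g - (g oo psi_T l)"

lemma lmpsi_add: "lmpsi l (f + g) = lmpsi l f + lmpsi l g"
  by (simp add: lmpsi_def fps_compose_add_distrib algebra_simps)

lemma lmpsi_diff: "lmpsi l (f - g) = lmpsi l f - lmpsi l g"
  by (simp add: lmpsi_def fps_compose_sub_distrib algebra_simps)

lemma lmpsi_const_mult: "lmpsi l (fps_const c * f) = fps_const c * lmpsi l f"
  by (simp add: lmpsi_def right_diff_distrib mult.left_commute
      flip: fps_const_mult_apply_left)

lemma lmpsi_zero [simp]: "lmpsi l 0 = 0"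
  using lmpsi_const_mult[of l 0 0] by simp

lemma fps_cong_lmpsi: "fps_cong c f g \<Longrightarrow> fps_cong c (lmpsi l f) (lmpsi l g)"
  unfolding fps_cong_iff_dvd lmpsi_diff[symmetric] by (auto simp: lmpsi_const_mult elim!: dvdE)

text \<open>(l - psi)(T Lambda) lies in T^2 Lambda: the coefficients at 1 and T vanish.\<close>

lemma lmpsi_X_mult_nth_0: "lmpsi l (fps_X * y) $ 0 = 0"
  by (simp add: lmpsi_def)

lemma lmpsi_X_mult_nth_1: "lmpsi l (fps_X * y) $ 1 = 0"
proof -
  have "((fps_X * y) oo psi_T l) $ 1 = y $ 0 * psi_T l $ 1"
    by (simp add: fps_compose_nth)
  also have "\<dots> = int l * y $ 0"
    by (simp add: psi_T_def one_plus_X_power_nth)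
  finally show ?thesis by (simp add: lmpsi_def)
qed

lemma fps_X_X_mult_shift:
  fixes h :: "'a::comm_ring_1 fps"
  assumes "h $ 0 = 0" "h $ 1 = 0"
  shows "fps_X * fps_X * fps_shift 2 h = h"
proof (intro fps_ext)
  fix k
  show "(fps_X * fps_X * fps_shift 2 h) $ k = h $ k"
    using assms unfolding power2_eq_square[symmetric] fps_X_power_mult_nth
    by (cases "k < 2") (auto simp: less_Suc_eq Suc_diff_Suc numeral_2_eq_2)
qed

lemma lmpsi_X_mult_cong:
  assumes "prime l"
  shows "fps_cong (int l) (lmpsi l (fps_X * y)) (- ((fps_X * y) oo fps_X ^ l))"
proof -
  have "fps_cong (int l) (fps_const (int l) * (fps_X * y)) 0"
    by (rule fps_cong_const_mult_zero)
  moreover have "fps_cong (int l) ((fps_X * y) oo psi_T l) ((fps_X * y) oo fps_X ^ l)"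
    using fps_cong_compose_right[OF psi_T_cong_X_power[OF assms, where 'a=int]] by simp
  ultimately show ?thesis
    unfolding lmpsi_def using fps_cong_diff by fastforce
qed

section \<open>The decomposition modulo powers of l\<close>

definition xi2_fps :: "nat \<Rightarrow> 'a::zero fps \<Rightarrow> bool" where
  "xi2_fps l a \<longleftrightarrow> (\<forall>k. (k < 2 \<or> l dvd k) \<longrightarrow> a $ k = 0)"

text \<open>Uniqueness modulo l: the exponents met by a and by (l - psi)(X*y) mod l are disjoint.\<close>

lemma kernel_trivial_mod_l:
  assumes "prime l" "xi2_fps l a" "fps_cong (int l) (a + lmpsi l (fps_X * y)) 0"
  shows "fps_cong (int l) a 0 \<and> fps_cong (int l) y 0"
proof -
  have l0: "l > 0" using assms prime_gt_0_nat by blast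
  have "fps_cong (int l) (a + lmpsi l (fps_X * y)) (a + - ((fps_X * y) oo fps_X ^ l))"
    by (rule fps_cong_add[OF fps_cong_refl lmpsi_X_mult_cong[OF assms(1)]])
  then have "fps_cong (int l) (a - ((fps_X * y) oo fps_X ^ l)) 0"
    using assms(3) by (metis fps_cong_sym fps_cong_trans diff_conv_add_uminus)
  then have d: "int l dvd a $ k - ((fps_X * y) oo fps_X ^ l) $ k" for k
    unfolding fps_cong_def by simp
  have "int l dvd a $ k" for k
    using d[of k] assms(2) by (cases "l dvd k") (auto simp: xi2_fps_def compose_X_mult_X_power_nth l0)
  moreover have "int l dvd y $ j" for j
  proof -
    have "l dvd l * (j + 1)" "l * (j + 1) \<noteq> 0" "l * (j + 1) div l - 1 = j" using l0 by auto
    then show ?thesis using d[of "l * (j + 1)"] assms(2)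
      by (simp add: xi2_fps_def compose_X_mult_X_power_nth l0 del: mult_Suc_right)
  qed
  ultimately show ?thesis unfolding fps_cong_def by simp
qed

text \<open>Uniqueness modulo l^n, by induction on n: a solution modulo l is divisible by l,
  and dividing by l gives a solution modulo l^(n-1).\<close>

lemma kernel_trivial_mod_power:
  assumes "prime l"
  shows "xi2_fps l a \<Longrightarrow> fps_cong (int l ^ n) (a + lmpsi l (fps_X * y)) 0
           \<Longrightarrow> fps_cong (int l ^ n) a 0 \<and> fps_cong (int l ^ n) y 0"
proof (induction n arbitrary: a y)
  case 0
  then show ?case by (simp add: fps_cong_def)
next
  case (Suc n)
  have l0: "int l \<noteq> 0" using assms by auto
  have "fps_cong (int l) (a + lmpsi l (fps_X * y)) 0"
    using Suc.prems(2) by (rule fps_cong_dvd_modulus) simp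
  then have "fps_cong (int l) a 0" "fps_cong (int l) y 0"
    using kernel_trivial_mod_l[OF assms Suc.prems(1)] by auto
  then obtain a' y' where a: "a = fps_const (int l) * a'" and y: "y = fps_const (int l) * y'"
    unfolding fps_cong_iff_dvd by (auto elim!: dvdE)
  have xi2: "xi2_fps l a'" using Suc.prems(1) l0 unfolding xi2_fps_def a by simp
  have "a + lmpsi l (fps_X * y) = fps_const (int l) * (a' + lmpsi l (fps_X * y'))"
    unfolding a y by (simp add: lmpsi_const_mult[symmetric] mult.left_commute distrib_left)
  then have "fps_cong (int l ^ n) (a' + lmpsi l (fps_X * y')) 0"
    using Suc.prems(2) fps_cong_cancel_const[OF l0, of _ _ 0] by simp
  then have "fps_cong (int l ^ n) a' 0 \<and> fps_cong (int l ^ n) y' 0" using Suc.IH xi2 by blast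
  then show ?case unfolding a y using fps_cong_cancel_const[OF l0, of _ _ 0] by simp
qed

lemma decomposition_unique_mod_power:
  assumes "prime l" "xi2_fps l a" "xi2_fps l a'"
    and "fps_cong (int l ^ n) (a + lmpsi l (fps_X * y)) (a' + lmpsi l (fps_X * y'))"
  shows "fps_cong (int l ^ n) a a' \<and> fps_cong (int l ^ n) y y'"
proof -
  have "xi2_fps l (a - a')" using assms(2,3) unfolding xi2_fps_def by simp
  moreover have "(a - a') + lmpsi l (fps_X * (y - y')) =
                   (a + lmpsi l (fps_X * y)) - (a' + lmpsi l (fps_X * y'))"
    by (simp add: right_diff_distrib lmpsi_diff algebra_simps)
  ultimately show ?thesis
    using kernel_trivial_mod_power[OF assms(1)] assms(4) by (metis fps_cong_sub_zero_iff)
qed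

text \<open>Existence modulo l: put the coefficients of f at exponents not divisible by l into a,
  and cancel those at exponents divisible by l with (l - psi)(X*y).\<close>

lemma decomposition_exists_mod_l:
  assumes "prime l" "f $ 0 = 0" "f $ 1 = 0"
  shows "\<exists>a y. xi2_fps l a \<and> fps_cong (int l) f (a + lmpsi l (fps_X * y))"
proof -
  have l2: "l \<ge> 2" using assms prime_ge_2_nat by blast
  define a where "a = Abs_fps (\<lambda>k. if l dvd k \<or> k < 2 then 0 else f $ k)"
  define y where "y = Abs_fps (\<lambda>j. - f $ (l * (j + 1)))"
  have xi2: "xi2_fps l a" unfolding xi2_fps_def a_def by simp
  have "f = a - ((fps_X * y) oo fps_X ^ l)"
  proof (intro fps_ext)
    fix k
    show "f $ k = (a - ((fps_X * y) oo fps_X ^ l)) $ k"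
    proof (cases "l dvd k \<and> k \<noteq> 0")
      case True
      then obtain m where m: "k = l * (Suc m)" by (metis dvdE not0_implies_Suc mult_0_right)
      then show ?thesis using l2 by (simp add: a_def y_def compose_X_mult_X_power_nth)
    next
      case False
      then show ?thesis using assms l2
        by (cases "k \<le> 1") (auto simp: a_def compose_X_mult_X_power_nth le_Suc_eq)
    qed
  qed
  also have "fps_cong (int l) \<dots> (a + lmpsi l (fps_X * y))"
    using fps_cong_add[OF fps_cong_refl fps_cong_sym[OF lmpsi_X_mult_cong[OF assms(1)]]]
    by simp
  finally show ?thesis using xi2 by blast
qed

text \<open>Existence modulo l^n: solve modulo l, divide the residual by l and solve for it
  modulo l^(n-1).\<close>

lemma decomposition_exists_mod_power:
  assumes "prime l"
  shows "f $ 0 = 0 \<Longrightarrow> f $ 1 = 0 \<Longrightarrow>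
           \<exists>a y. xi2_fps l a \<and> fps_cong (int l ^ n) f (a + lmpsi l (fps_X * y))"
proof (induction n arbitrary: f)
  case 0
  then show ?case by (auto simp: fps_cong_def xi2_fps_def intro!: exI[of _ 0])
next
  case (Suc n)
  have l0: "int l \<noteq> 0" using assms by auto
  obtain a0 y0 where a0: "xi2_fps l a0" and r0: "fps_cong (int l) f (a0 + lmpsi l (fps_X * y0))"
    using decomposition_exists_mod_l[OF assms Suc.prems] by blast
  obtain f1 where f1: "f - (a0 + lmpsi l (fps_X * y0)) = fps_const (int l) * f1"
    using r0 unfolding fps_cong_iff_dvd by (auto elim: dvdE)
  have "(fps_const (int l) * f1) $ 0 = 0" "(fps_const (int l) * f1) $ 1 = 0"
    unfolding f1[symmetric] using Suc.prems a0 lmpsi_X_mult_nth_0 lmpsi_X_mult_nth_1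
    by (auto simp: xi2_fps_def)
  then have "f1 $ 0 = 0" "f1 $ 1 = 0" using l0 by auto
  then obtain a1 y1 where a1: "xi2_fps l a1"
    and r1: "fps_cong (int l ^ n) f1 (a1 + lmpsi l (fps_X * y1))"
    using Suc.IH by blast
  define a where "a = a0 + fps_const (int l) * a1"
  define y where "y = y0 + fps_const (int l) * y1"
  have "xi2_fps l a" using a0 a1 unfolding xi2_fps_def a_def by simp
  moreover have "fps_cong (int l ^ Suc n) f (a + lmpsi l (fps_X * y))"
  proof -
    have f: "f = fps_const (int l) * f1 + (a0 + lmpsi l (fps_X * y0))"
      using f1 by (simp add: algebra_simps)
    have ay: "a + lmpsi l (fps_X * y) =
        fps_const (int l) * (a1 + lmpsi l (fps_X * y1)) + (a0 + lmpsi l (fps_X * y0))"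
    proof -
      have "fps_X * y = fps_X * y0 + fps_const (int l) * (fps_X * y1)"
        unfolding y_def by (simp add: algebra_simps)
      then have "lmpsi l (fps_X * y) = lmpsi l (fps_X * y0) + fps_const (int l) * lmpsi l (fps_X * y1)"
        by (simp add: lmpsi_add lmpsi_const_mult)
      then show ?thesis unfolding a_def by (simp add: algebra_simps)
    qed
    have "fps_cong (int l * int l ^ n) (fps_const (int l) * f1)
            (fps_const (int l) * (a1 + lmpsi l (fps_X * y1)))"
      using r1 fps_cong_cancel_const[OF l0] by blast
    then show ?thesis unfolding f ay by (simp add: fps_cong_add)
  qed
  ultimately show ?case by blast
qed

text \<open>For a compatible family f_n (f_(n+1) == f_n mod l^n) the levelwise decompositions
  can be chosen, and by uniqueness they are automatically compatible as well.\<close>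

lemma compatible_decompositions:
  assumes "prime l"
    and f_Suc: "\<And>n. fps_cong (int l ^ n) (f (Suc n)) (f n)"
    and f01: "\<And>n. f n $ 0 = 0" "\<And>n. f n $ 1 = 0"
  obtains A Y where "\<And>n. xi2_fps l (A n)"
    "\<And>n. fps_cong (int l ^ n) (f n) (A n + lmpsi l (fps_X * Y n))"
    "\<And>n. fps_cong (int l ^ n) (A (Suc n)) (A n)"
    "\<And>n. fps_cong (int l ^ n) (Y (Suc n)) (Y n)"
proof -
  have "\<forall>n. \<exists>a y. xi2_fps l a \<and> fps_cong (int l ^ n) (f n) (a + lmpsi l (fps_X * y))"
    using decomposition_exists_mod_power[OF assms(1) f01] by blast
  then obtain A Y where A: "\<And>n. xi2_fps l (A n)"
    and AY: "\<And>n. fps_cong (int l ^ n) (f n) (A n + lmpsi l (fps_X * Y n))"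
    by metis
  have "fps_cong (int l ^ n) (A (Suc n)) (A n) \<and> fps_cong (int l ^ n) (Y (Suc n)) (Y n)" for n
  proof -
    have "fps_cong (int l ^ n) (f (Suc n)) (A (Suc n) + lmpsi l (fps_X * Y (Suc n)))"
      using AY[of "Suc n"] by (rule fps_cong_dvd_modulus) simp
    then have "fps_cong (int l ^ n) (A (Suc n) + lmpsi l (fps_X * Y (Suc n))) (f (Suc n))"
      by (rule fps_cong_sym)
    also note f_Suc[of n]
    also note AY[of n]
    finally show ?thesis by (rule decomposition_unique_mod_power[OF assms(1) A A])
  qed
  then show ?thesis using A AY that by blast
qed

section \<open>Transfer to Lambda\<close>

lemma level_nth [simp]: "level x n $ k = x k n"
  by (simp add: level_def)

lemma level_of_levels: "fps_cong (int l ^ n) (level (of_levels l F) n) (F n)"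
  unfolding fps_cong_def level_def of_levels_def by (simp add: mod_eq_dvd_iff[symmetric])

lemma of_levels_cong:
  "(\<And>n. fps_cong (int l ^ n) (F n) (G n)) \<Longrightarrow> of_levels l F = of_levels l G"
  unfolding fps_cong_def of_levels_def by (intro ext) (simp add: mod_eq_dvd_iff)

lemma of_levels_in_lam_set:
  assumes "l > 0" "\<And>n. fps_cong (int l ^ n) (F (Suc n)) (F n)"
  shows "of_levels l F \<in> lam_set l"
  unfolding lam_set_def zl_set_def of_levels_def
proof (intro allI CollectI conjI)
  fix k n
  have pos: "int l ^ n > 0" using assms by simp
  show "0 \<le> F n $ k mod int l ^ n" "F n $ k mod int l ^ n < int l ^ n" using pos by auto
  have "F (Suc n) $ k mod int l ^ Suc n mod int l ^ n = F (Suc n) $ k mod int l ^ n"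
    by (simp add: mod_mod_cancel)
  also have "\<dots> = F n $ k mod int l ^ n"
    using assms(2)[of n] unfolding fps_cong_def by (simp add: mod_eq_dvd_iff)
  finally show "F (Suc n) $ k mod int l ^ Suc n mod int l ^ n = F n $ k mod int l ^ n" .
qed

lemma level_Suc_cong: "x \<in> lam_set l \<Longrightarrow> fps_cong (int l ^ n) (level x (Suc n)) (level x n)"
  unfolding fps_cong_def lam_set_def zl_set_def by (auto simp: mod_eq_dvd_iff[symmetric])

lemma lam_eq_zeroI:
  assumes "x \<in> lam_set l" "\<And>n. fps_cong (int l ^ n) (level x n) 0"
  shows "x = lam_zero"
proof (intro ext)
  fix k n
  have "0 \<le> x k n" "x k n < int l ^ n" using assms(1) unfolding lam_set_def zl_set_def by auto
  moreover have "int l ^ n dvd x k n" using assms(2)[of n] unfolding fps_cong_def by simp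
  ultimately show "x k n = lam_zero k n"
    unfolding lam_zero_def by (metis dvd_imp_mod_0 mod_pos_pos_trivial)
qed

lemma level_lam_zero [simp]: "level lam_zero n = 0"
  by (intro fps_ext) (simp add: lam_zero_def)

lemma lam_zero_eq_of_levels: "lam_zero = of_levels l (\<lambda>n. 0)"
  unfolding lam_zero_def of_levels_def by simp

lemma level_lam_mul: "fps_cong (int l ^ n) (level (lam_mul l x y) n) (level x n * level y n)"
  unfolding lam_mul_def by (rule level_of_levels)

lemma level_lam_T: "fps_cong (int l ^ n) (level (lam_T l) n) fps_X"
  unfolding lam_T_def using level_of_levels[of l n "\<lambda>n. fps_X"] by simp

lemma lam_l_minus_psi_eq: "lam_l_minus_psi l x = of_levels l (\<lambda>n. lmpsi l (level x n))"
  unfolding lam_l_minus_psi_def lmpsi_def psi_T_def ..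

lemma level_lam_l_minus_psi_T:
  "fps_cong (int l ^ n) (level (lam_l_minus_psi l (lam_mul l (lam_T l) y)) n)
     (lmpsi l (fps_X * level y n))"
  unfolding lam_l_minus_psi_eq
  by (metis fps_cong_trans level_of_levels fps_cong_lmpsi level_lam_mul fps_cong_mult
      level_lam_T fps_cong_refl)

lemma lam_mul_T2_eq_add:
  assumes "\<And>n. fps_cong (int l ^ n) (fps_X * fps_X * level z n)
                                     (level a n + lmpsi l (fps_X * level y n))"
  shows "lam_mul l (lam_mul l (lam_T l) (lam_T l)) z
           = lam_add l a (lam_l_minus_psi l (lam_mul l (lam_T l) y))"
  unfolding lam_add_def lam_mul_def[of l "lam_mul l (lam_T l) (lam_T l)" z]
proof (rule of_levels_cong)
  fix n
  have "fps_cong (int l ^ n) (level (lam_mul l (lam_T l) (lam_T l)) n * level z n)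
          (fps_X * fps_X * level z n)"
    by (meson fps_cong_trans level_lam_mul fps_cong_mult level_lam_T fps_cong_refl)
  also note assms[of n]
  also have "fps_cong (int l ^ n) (level a n + lmpsi l (fps_X * level y n))
               (level a n + level (lam_l_minus_psi l (lam_mul l (lam_T l) y)) n)"
    by (intro fps_cong_add fps_cong_refl fps_cong_sym[OF level_lam_l_minus_psi_T])
  finally show "fps_cong (int l ^ n) (level (lam_mul l (lam_T l) (lam_T l)) n * level z n)
                  (level a n + level (lam_l_minus_psi l (lam_mul l (lam_T l) y)) n)" .
qed

lemma level_in_Xi: "x \<in> Xi l 2 \<Longrightarrow> xi2_fps l (level x n)"
  unfolding Xi_def xi2_fps_def by simp

lemma of_levels_in_Xi:
  assumes "l > 0" "\<And>n. fps_cong (int l ^ n) (F (Suc n)) (F n)" "\<And>n. xi2_fps l (F n)"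
  shows "of_levels l F \<in> Xi l 2"
  using of_levels_in_lam_set[OF assms(1,2)] assms(3)
  unfolding Xi_def xi2_fps_def of_levels_def by auto

section \<open>The direct sum decomposition\<close>

text \<open>Every element of T^2 Lambda is a sum as claimed: decompose its levels compatibly and
  assemble the two families into elements of Xi_2 and Lambda.\<close>

lemma T2Lam_subset_sum:
  assumes "prime l"
  shows "T2Lam l \<subseteq> {lam_add l a b | a b. a \<in> Xi l 2 \<and> b \<in> LpsiTLam l}"
proof
  fix t assume "t \<in> T2Lam l"
  then obtain z where z: "z \<in> lam_set l" and t: "t = lam_mul l (lam_mul l (lam_T l) (lam_T l)) z"
    unfolding T2Lam_def by blast
  have l0: "l > 0" using assms prime_gt_0_nat by blast
  have "fps_cong (int l ^ n) (fps_X * fps_X * level z (Suc n)) (fps_X * fps_X * level z n)" for n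
    by (intro fps_cong_mult fps_cong_refl level_Suc_cong z)
  then obtain A Y where A: "\<And>n. xi2_fps l (A n)"
    and AY: "\<And>n. fps_cong (int l ^ n) (fps_X * fps_X * level z n) (A n + lmpsi l (fps_X * Y n))"
    and A_Suc: "\<And>n. fps_cong (int l ^ n) (A (Suc n)) (A n)"
    and Y_Suc: "\<And>n. fps_cong (int l ^ n) (Y (Suc n)) (Y n)"
    by (rule compatible_decompositions[OF assms]) auto
  define a where "a = of_levels l A"
  define y where "y = of_levels l Y"
  have a: "a \<in> Xi l 2" unfolding a_def using of_levels_in_Xi[OF l0 A_Suc A] .
  have y: "y \<in> lam_set l" unfolding y_def using of_levels_in_lam_set[OF l0 Y_Suc] .
  have "fps_cong (int l ^ n) (fps_X * fps_X * level z n) (level a n + lmpsi l (fps_X * level y n))"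
    for n
  proof -
    note AY[of n]
    also have "fps_cong (int l ^ n) (A n + lmpsi l (fps_X * Y n))
                 (level a n + lmpsi l (fps_X * level y n))"
      unfolding a_def y_def
      by (intro fps_cong_add fps_cong_lmpsi fps_cong_mult fps_cong_refl fps_cong_sym[OF level_of_levels])
    finally show ?thesis .
  qed
  then have "t = lam_add l a (lam_l_minus_psi l (lam_mul l (lam_T l) y))"
    unfolding t by (rule lam_mul_T2_eq_add)
  then show "t \<in> {lam_add l a b | a b. a \<in> Xi l 2 \<and> b \<in> LpsiTLam l}"
    using a y unfolding LpsiTLam_def by blast
qed

text \<open>Conversely a + (l - psi)(T y) lies in T^2 Lambda: its levels have vanishing coefficients
  at 1 and T, so they are T^2 times their double shifts, and these are compatible.\<close>

lemma sum_subset_T2Lam: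
  assumes "prime l"
  shows "{lam_add l a b | a b. a \<in> Xi l 2 \<and> b \<in> LpsiTLam l} \<subseteq> T2Lam l"
proof
  fix t assume "t \<in> {lam_add l a b | a b. a \<in> Xi l 2 \<and> b \<in> LpsiTLam l}"
  then obtain a y where a: "a \<in> Xi l 2" and y: "y \<in> lam_set l"
    and t: "t = lam_add l a (lam_l_minus_psi l (lam_mul l (lam_T l) y))"
    unfolding LpsiTLam_def by blast
  have l0: "l > 0" using assms prime_gt_0_nat by blast
  have a_lam: "a \<in> lam_set l" using a unfolding Xi_def by blast
  define h where "h n = level a n + lmpsi l (fps_X * level y n)" for n
  have h01: "h n $ 0 = 0" "h n $ 1 = 0" for n
    using level_in_Xi[OF a, of n] lmpsi_X_mult_nth_0 lmpsi_X_mult_nth_1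
    unfolding h_def xi2_fps_def by auto
  have "fps_cong (int l ^ n) (h (Suc n)) (h n)" for n
    unfolding h_def by (intro fps_cong_add fps_cong_lmpsi fps_cong_mult fps_cong_refl level_Suc_cong a_lam y)
  then have "fps_cong (int l ^ n) (fps_shift 2 (h (Suc n))) (fps_shift 2 (h n))" for n
    by (rule fps_cong_shift)
  then have z: "of_levels l (\<lambda>n. fps_shift 2 (h n)) \<in> lam_set l"
    by (rule of_levels_in_lam_set[OF l0])
  have "fps_cong (int l ^ n) (fps_X * fps_X * level (of_levels l (\<lambda>n. fps_shift 2 (h n))) n) (h n)"
    for n
  proof -
    have "fps_cong (int l ^ n) (fps_X * fps_X * level (of_levels l (\<lambda>n. fps_shift 2 (h n))) n)
            (fps_X * fps_X * fps_shift 2 (h n))"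
      by (intro fps_cong_mult fps_cong_refl level_of_levels)
    then show ?thesis unfolding fps_X_X_mult_shift[OF h01] .
  qed
  then have "lam_mul l (lam_mul l (lam_T l) (lam_T l)) (of_levels l (\<lambda>n. fps_shift 2 (h n))) = t"
    unfolding t h_def by (rule lam_mul_T2_eq_add)
  then show "t \<in> T2Lam l" using z unfolding T2Lam_def by blast
qed

lemma lam_zero_in_Xi_LpsiTLam:
  assumes "l > 0"
  shows "lam_zero \<in> Xi l 2 \<inter> LpsiTLam l"
proof -
  have zero_lam: "lam_zero \<in> lam_set l"
    unfolding lam_set_def zl_set_def lam_zero_def using assms by simp
  have "lam_l_minus_psi l (lam_mul l (lam_T l) lam_zero) = of_levels l (\<lambda>n. 0)"
    unfolding lam_l_minus_psi_eq
  proof (rule of_levels_cong)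
    fix n
    have "fps_cong (int l ^ n) (level (lam_mul l (lam_T l) lam_zero) n) 0"
      using level_lam_mul[of l n "lam_T l" lam_zero] by simp
    then show "fps_cong (int l ^ n) (lmpsi l (level (lam_mul l (lam_T l) lam_zero) n)) 0"
      using fps_cong_lmpsi by fastforce
  qed
  then have "lam_zero \<in> LpsiTLam l"
    unfolding LpsiTLam_def lam_zero_eq_of_levels[symmetric] using zero_lam
    by (intro CollectI exI[of _ lam_zero]) simp
  moreover have "lam_zero \<in> Xi l 2" unfolding Xi_def using zero_lam by (simp add: lam_zero_def)
  ultimately show ?thesis by blast
qed

text \<open>The sum is direct: an element of Xi_2 of the form (l - psi)(T y) vanishes at every
  level by uniqueness of the levelwise decomposition.\<close>

lemma Xi_inter_LpsiTLam:
  assumes "prime l"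
  shows "Xi l 2 \<inter> LpsiTLam l = {lam_zero}"
proof (intro equalityI subsetI)
  fix x assume "x \<in> Xi l 2 \<inter> LpsiTLam l"
  then obtain y where x: "x \<in> Xi l 2" and xy: "x = lam_l_minus_psi l (lam_mul l (lam_T l) y)"
    unfolding LpsiTLam_def by blast
  have "fps_cong (int l ^ n) (level x n) 0" for n
  proof -
    have "fps_cong (int l ^ n) (level x n + lmpsi l (fps_X * 0)) (0 + lmpsi l (fps_X * level y n))"
      using level_lam_l_minus_psi_T[of l n y] unfolding xy by simp
    moreover have "xi2_fps l (0 :: int fps)" by (simp add: xi2_fps_def)
    ultimately show ?thesis
      using decomposition_unique_mod_power[OF assms level_in_Xi[OF x]] by blast
  qed
  moreover have "x \<in> lam_set l" using x unfolding Xi_def by blast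
  ultimately show "x \<in> {lam_zero}" using lam_eq_zeroI by blast
next
  fix x assume "x \<in> {lam_zero}"
  then show "x \<in> Xi l 2 \<inter> LpsiTLam l"
    using lam_zero_in_Xi_LpsiTLam[OF prime_gt_0_nat[OF assms]] by simp
qed

theorem mainTheorem7:
  fixes l :: nat
  assumes "prime l" and "odd l"
  shows "T2Lam l = {lam_add l a b | a b. a \<in> Xi l 2 \<and> b \<in> LpsiTLam l}
         \<and> Xi l 2 \<inter> LpsiTLam l = {lam_zero}"
  using T2Lam_subset_sum[OF assms(1)] sum_subset_T2Lam[OF assms(1)] Xi_inter_LpsiTLam[OF assms(1)]
  by blast

end
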